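(* Let $k\geq2$ and let $L=(l_1,\dots,l_k)$ be generic positive integers with sum $n$. Let $X=(u,v)$ be an oriented 1-simplex of $Tonn^{n,k}(L)$ with $L$-type $I\subseteq[k]$. Then $X$ is homotopic relative to its end-points to an edge-path $Y_1Y_2\cdots Y_t$ consisting of $\oplus$-atomic oriented 1-simplices, where $t=|I|$ and the types of $Y_1,\dots,Y_t$ are pairwise distinct and together form exactly the set $I$.
   Context: The generalized tonnetz $Tonn^{n,k}(L)$ is the simplicial complex on vertex set $\mathbb{Z}_n$ whose maximal simplices are $\Delta(x;\sigma)=\{x,\,x+l_{\sigma(1)},\dots,x+l_{\sigma(1)}+\dots+l_{\sigma(k-1)}\}$ for $x\in\mathbb{Z}_n$, $\sigma\in S_k$. $L$ is generic if for all $I,J\subseteq[k]$, $\sum_{i\in I}l_i=\sum_{j\in J}l_j$ implies $I=J$. For an oriented 1-simplex $X=(u,v)$, its $L$-type is the unique nonempty $I\subseteq[k]$ with $v-u\equiv\sum_{j\in I}l_j\pmod n$, where $v-u$ is taken in $\{1,\dots,n-1\}$ (it exists since $\{u,v\}$ lies in some $\Delta(x;\sigma)$, and is unique by genericity). $X$ is $\oplus$-atomic of type $i$ if $v=u+l_i$ in $\mathbb{Z}_n$. Edge-paths are sequences of oriented 1-simplices with matching end-points; two edge-paths with the same end-points are homotopic (rel end-points) if one is obtained from the other by finitely many elementary moves: replacing an edge $(a,c)$ by $(a,b)(b,c)$ where $\{a,b,c\}$ is a simplex, or the reverse (including insertion/deletion of backtracks $(a,b)(b,a)$). *)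

theory Defs
  imports "HOL-Combinatorics.Permutations"
begin

text \<open>Generalized tonnetz Tonn^{n,k}(L). Vertices are the integers 0..n-1 (representing Z_n);
  L = (l 1, ..., l k) is given as a function on indices 1..k.\<close>

definition tonn_Delta :: "int \<Rightarrow> nat \<Rightarrow> (nat \<Rightarrow> int) \<Rightarrow> int \<Rightarrow> (nat \<Rightarrow> nat) \<Rightarrow> int set" where
  "tonn_Delta n k l x \<sigma> = {(x + (\<Sum>j\<in>{1..i}. l (\<sigma> j))) mod n | i. i < k}"

definition tonn_simplex :: "int \<Rightarrow> nat \<Rightarrow> (nat \<Rightarrow> int) \<Rightarrow> int set \<Rightarrow> bool" where
  "tonn_simplex n k l S \<longleftrightarrow> S \<noteq> {} \<and>
     (\<exists>x \<sigma>. x \<in> {0..<n} \<and> \<sigma> permutes {1..k} \<and> S \<subseteq> tonn_Delta n k l x \<sigma>)"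

definition generic :: "nat \<Rightarrow> (nat \<Rightarrow> int) \<Rightarrow> bool" where
  "generic k l \<longleftrightarrow> (\<forall>I J. I \<subseteq> {1..k} \<longrightarrow> J \<subseteq> {1..k} \<longrightarrow> sum l I = sum l J \<longrightarrow> I = J)"

definition oriented_edge :: "int \<Rightarrow> nat \<Rightarrow> (nat \<Rightarrow> int) \<Rightarrow> int \<times> int \<Rightarrow> bool" where
  "oriented_edge n k l e \<longleftrightarrow> fst e \<in> {0..<n} \<and> snd e \<in> {0..<n} \<and> fst e \<noteq> snd e
      \<and> tonn_simplex n k l {fst e, snd e}"

definition L_type :: "int \<Rightarrow> nat \<Rightarrow> (nat \<Rightarrow> int) \<Rightarrow> int \<times> int \<Rightarrow> nat set \<Rightarrow> bool" where
  "L_type n k l e I \<longleftrightarrow> I \<noteq> {} \<and> I \<subseteq> {1..k} \<and> (snd e - fst e) mod n = (sum l I) mod n"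

definition atomic :: "int \<Rightarrow> nat \<Rightarrow> (nat \<Rightarrow> int) \<Rightarrow> int \<times> int \<Rightarrow> nat \<Rightarrow> bool" where
  "atomic n k l e i \<longleftrightarrow> oriented_edge n k l e \<and> i \<in> {1..k} \<and> snd e = (fst e + l i) mod n"

fun edge_path :: "int \<Rightarrow> nat \<Rightarrow> (nat \<Rightarrow> int) \<Rightarrow> int \<Rightarrow> (int \<times> int) list \<Rightarrow> int \<Rightarrow> bool" where
  "edge_path n k l a [] b \<longleftrightarrow> a = b"
| "edge_path n k l a (e # es) b \<longleftrightarrow> fst e = a \<and> oriented_edge n k l e \<and> edge_path n k l (snd e) es b"

definition elem_move :: "int \<Rightarrow> nat \<Rightarrow> (nat \<Rightarrow> int) \<Rightarrow> (int \<times> int) list \<Rightarrow> (int \<times> int) list \<Rightarrow> bool" where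
  "elem_move n k l p q \<longleftrightarrow>
     (\<exists>xs ys a b c. p = xs @ [(a,c)] @ ys \<and> q = xs @ [(a,b),(b,c)] @ ys \<and> tonn_simplex n k l {a,b,c})
   \<or> (\<exists>xs ys a b. p = xs @ ys \<and> q = xs @ [(a,b),(b,a)] @ ys \<and> tonn_simplex n k l {a,b})"

definition homotopic_rel :: "int \<Rightarrow> nat \<Rightarrow> (nat \<Rightarrow> int) \<Rightarrow> int \<Rightarrow> int \<Rightarrow> (int \<times> int) list \<Rightarrow> (int \<times> int) list \<Rightarrow> bool" where
  "homotopic_rel n k l u v p q \<longleftrightarrow>
     (\<lambda>p q. edge_path n k l u p v \<and> edge_path n k l u q v \<and> (elem_move n k l p q \<or> elem_move n k l q p))\<^sup>*\<^sup>* p q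
     \<and> edge_path n k l u p v \<and> edge_path n k l u q v"

end

theory Submission
  imports Defs
begin

text \<open>Enumerate the type I as \<tau>(1), ..., \<tau>(t) for a permutation \<tau> of [k] and walk from u
  in steps l_\<tau>(1), ..., l_\<tau>(t). The vertices visited are the first t + 1 vertices of the
  maximal simplex \<Delta>(u; \<tau>); they are distinct because t < k and the partial sums of the
  positive l_i increase strictly from 0 to n, and the walk ends at v. Inside this one simplex
  the edge (u, v) is deformed into the walk by repeatedly splitting the last edge (w_m, v)
  across the triangle {w_m, w_(m+1), v}.\<close>

lemma obtain_permutes_image_eq:
  assumes "finite S" "A \<subseteq> S" "B \<subseteq> S" "card A = card B"
  obtains p where "p permutes S" "p ` A = B"
proof -
  have fin: "finite A" "finite B" "finite (S - A)" "finite (S - B)"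
    using assms finite_subset by auto
  obtain f where f: "bij_betw f A B"
    using bij_betw_iff_card[OF fin(1,2)] assms(4) by blast
  have "card (S - A) = card (S - B)"
    using assms by (simp add: card_Diff_subset fin)
  then obtain g where g: "bij_betw g (S - A) (S - B)"
    using bij_betw_iff_card[OF fin(3,4)] by blast
  define p where "p x = (if x \<in> S then if x \<in> A then f x else g x else x)" for x
  have "bij_betw (\<lambda>x. if x \<in> A then f x else g x) (A \<union> (S - A)) (B \<union> (S - B))"
    using bij_betw_disjoint_Un[OF f g] by blast
  then have "bij_betw p S S"
    using assms(2,3) by (auto simp: p_def Un_absorb1 intro: bij_betw_cong[THEN iffD1])
  then have "p permutes S"
    by (rule bij_imp_permutes) (simp add: p_def)
  moreover have "p ` A = B"
    using assms(2) bij_betw_imp_surj_on[OF f] by (auto simp: p_def image_def)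
  ultimately show thesis by (rule that)
qed

lemma sum_atLeastAtMost_strict_mono:
  fixes f :: "nat \<Rightarrow> 'a::ordered_cancel_comm_monoid_add"
  assumes "\<And>m. m \<in> {1..k} \<Longrightarrow> f m > 0" "i < j" "j \<le> k"
  shows "sum f {1..i} < sum f {1..j}"
  using assms by (intro sum_strict_mono2[where b = j]) (auto intro: less_imp_le)

definition tonn_vertex :: "int \<Rightarrow> (nat \<Rightarrow> int) \<Rightarrow> int \<Rightarrow> (nat \<Rightarrow> nat) \<Rightarrow> nat \<Rightarrow> int" where
  "tonn_vertex n l x \<sigma> i = (x + (\<Sum>j\<in>{1..i}. l (\<sigma> j))) mod n"

lemma tonn_Delta_eq_image_tonn_vertex:
  "tonn_Delta n k l x \<sigma> = tonn_vertex n l x \<sigma> ` {..<k}"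
  by (auto simp: tonn_Delta_def tonn_vertex_def)

lemma tonn_vertex_0: "x \<in> {0..<n} \<Longrightarrow> tonn_vertex n l x \<sigma> 0 = x"
  by (simp add: tonn_vertex_def)

lemma tonn_vertex_Suc:
  "tonn_vertex n l x \<sigma> (Suc i) = (tonn_vertex n l x \<sigma> i + l (\<sigma> (Suc i))) mod n"
  by (simp add: tonn_vertex_def mod_add_left_eq add.assoc)

lemma tonn_vertex_in_range: "n > 0 \<Longrightarrow> tonn_vertex n l x \<sigma> i \<in> {0..<n}"
  by (simp add: tonn_vertex_def)

lemma tonn_simplex_tonn_vertex:
  assumes "x \<in> {0..<n}" "\<sigma> permutes {1..k}" "A \<subseteq> tonn_vertex n l x \<sigma> ` {..<k}" "A \<noteq> {}"
  shows "tonn_simplex n k l A"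
  using assms unfolding tonn_simplex_def tonn_Delta_eq_image_tonn_vertex by blast

lemma inj_on_tonn_vertex:
  assumes "\<sigma> permutes {1..k}" "\<forall>i\<in>{1..k}. l i > 0" "n = (\<Sum>i\<in>{1..k}. l i)"
  shows "inj_on (tonn_vertex n l x \<sigma>) {..<k}"
proof (rule linorder_inj_onI')
  fix i j assume "i \<in> {..<k}" and ij: "j \<in> {..<k}" "i < j"
  define p where "p m = (\<Sum>r\<in>{1..m}. l (\<sigma> r))" for m
  have pos: "l (\<sigma> m) > 0" if "m \<in> {1..k}" for m
    using assms(2) permutes_in_image[OF assms(1)] that by simp
  have mono: "p a < p b" if "a < b" "b \<le> k" for a b
    unfolding p_def by (rule sum_atLeastAtMost_strict_mono[of k]) (use that pos in auto)
  have "p 0 = 0" "p k = n"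
    using sum.permute[OF assms(1), of l] assms(3) by (simp_all add: p_def comp_def)
  moreover have "p 0 \<le> p i" "p i < p j" "p j < p k"
    using ij mono mono[of 0 i] by (fastforce intro: less_imp_le)+
  ultimately have "0 < p j - p i" "p j - p i < n"
    by linarith+
  then have "\<not> n dvd p j - p i"
    using zdvd_imp_le by fastforce
  then show "tonn_vertex n l x \<sigma> i \<noteq> tonn_vertex n l x \<sigma> j"
    by (simp add: tonn_vertex_def p_def mod_eq_dvd_iff dvd_diff_commute)
qed

lemma oriented_edge_tonn_vertex:
  assumes "x \<in> {0..<n}" "\<sigma> permutes {1..k}" "\<forall>i\<in>{1..k}. l i > 0" "n = (\<Sum>i\<in>{1..k}. l i)"
    and "i < k" "j < k" "i \<noteq> j"
  shows "oriented_edge n k l (tonn_vertex n l x \<sigma> i, tonn_vertex n l x \<sigma> j)"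
proof -
  have "tonn_vertex n l x \<sigma> i \<noteq> tonn_vertex n l x \<sigma> j"
    using inj_onD[OF inj_on_tonn_vertex[OF assms(2-4)]] assms(5-7) by blast
  moreover have "tonn_simplex n k l {tonn_vertex n l x \<sigma> i, tonn_vertex n l x \<sigma> j}"
    using assms(5,6) by (intro tonn_simplex_tonn_vertex[OF assms(1,2)]) auto
  ultimately show ?thesis
    using assms(1) tonn_vertex_in_range[of n] by (simp add: oriented_edge_def)
qed

lemma edge_path_append:
  "edge_path n k l a (xs @ ys) b \<longleftrightarrow> (\<exists>c. edge_path n k l a xs c \<and> edge_path n k l c ys b)"
  by (induction xs arbitrary: a) auto

definition vertex_path :: "(nat \<Rightarrow> 'a) \<Rightarrow> nat \<Rightarrow> ('a \<times> 'a) list" where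
  "vertex_path w m = map (\<lambda>j. (w j, w (Suc j))) [0..<m]"

lemma length_vertex_path [simp]: "length (vertex_path w m) = m"
  by (simp add: vertex_path_def)

lemma vertex_path_Suc: "vertex_path w (Suc m) = vertex_path w m @ [(w m, w (Suc m))]"
  by (simp add: vertex_path_def)

lemma edge_path_vertex_path:
  assumes "\<And>j. j < m \<Longrightarrow> oriented_edge n k l (w j, w (Suc j))"
  shows "edge_path n k l (w 0) (vertex_path w m) (w m)"
  using assms by (induction m) (auto simp: vertex_path_def vertex_path_Suc edge_path_append)

lemma homotopic_rel_refl: "edge_path n k l u p v \<Longrightarrow> homotopic_rel n k l u v p p"
  by (simp add: homotopic_rel_def)

lemma homotopic_rel_trans:
  "homotopic_rel n k l u v p q \<Longrightarrow> homotopic_rel n k l u v q r \<Longrightarrow> homotopic_rel n k l u v p r"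
  unfolding homotopic_rel_def by (meson rtranclp_trans)

lemma homotopic_rel_elem_move:
  "edge_path n k l u p v \<Longrightarrow> edge_path n k l u q v \<Longrightarrow> elem_move n k l p q
    \<Longrightarrow> homotopic_rel n k l u v p q"
  unfolding homotopic_rel_def by (auto intro: r_into_rtranclp)

lemma homotopic_rel_edge_vertex_path:
  assumes edges: "\<And>i j. i \<le> t \<Longrightarrow> j \<le> t \<Longrightarrow> i \<noteq> j \<Longrightarrow> oriented_edge n k l (w i, w j)"
    and triangles: "\<And>i j m. i \<le> t \<Longrightarrow> j \<le> t \<Longrightarrow> m \<le> t \<Longrightarrow> tonn_simplex n k l {w i, w j, w m}"
    and "0 < t"
  shows "homotopic_rel n k l (w 0) (w t) [(w 0, w t)] (vertex_path w t)"
proof -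
  define P where "P m = vertex_path w m @ [(w m, w t)]" for m
  have path: "edge_path n k l (w 0) (P m) (w t)" if "m < t" for m
    using that edge_path_vertex_path[of m n k l w] edges by (auto simp: P_def edge_path_append)
  have hom: "homotopic_rel n k l (w 0) (w t) [(w 0, w t)] (P m)" if "m < t" for m
    using that
  proof (induction m)
    case 0
    show ?case
      using path[OF 0] by (simp add: P_def vertex_path_def homotopic_rel_refl)
  next
    case (Suc m)
    have "elem_move n k l (P m) (P (Suc m))"
      unfolding elem_move_def P_def vertex_path_Suc
      using triangles[of m "Suc m" t] Suc.prems by fastforce
    then show ?case
      using Suc path by (meson Suc_lessD homotopic_rel_trans homotopic_rel_elem_move)
  qed
  obtain s where "t = Suc s"
    using \<open>0 < t\<close> gr0_implies_Suc by blast
  then show ?thesis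
    using hom[of s] by (simp add: P_def vertex_path_Suc)
qed

lemma tonn_vertex_eq_of_image:
  assumes "inj_on \<sigma> {1..t}" "\<sigma> ` {1..t} = I" "v \<in> {0..<n}" "(v - u) mod n = sum l I mod n"
  shows "tonn_vertex n l u \<sigma> t = v"
proof -
  have "tonn_vertex n l u \<sigma> t = (u + sum l I) mod n"
    using sum.reindex[OF assms(1), of l] assms(2) by (simp add: tonn_vertex_def)
  also have "\<dots> = (u + (v - u)) mod n"
    using assms(4) by (metis mod_add_right_eq)
  finally show ?thesis
    using assms(3) by simp
qed

lemma bij_betw_Suc_shift:
  assumes "inj_on \<sigma> {1..t}"
  shows "bij_betw (\<lambda>j. \<sigma> (Suc j)) {..<t} (\<sigma> ` {1..t})"
proof -
  have "bij_betw Suc {..<t} {1..t}"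
    by (simp add: bij_betw_def image_Suc_lessThan)
  from bij_betw_trans[OF this inj_on_imp_bij_betw[OF assms]] show ?thesis
    by (simp add: comp_def)
qed

lemma card_L_type_less:
  assumes "n = (\<Sum>i\<in>{1..k}. l i)" "oriented_edge n k l (u, v)" "L_type n k l (u, v) I"
  shows "card I < k"
proof -
  have uv: "u \<in> {0..<n}" "v \<in> {0..<n}" "u \<noteq> v"
    using assms(2) by (auto simp: oriented_edge_def)
  have "I \<noteq> {1..k}"
  proof
    assume "I = {1..k}"
    then have "(v - u) mod n = 0"
      using assms(1,3) by (simp add: L_type_def)
    then have "v mod n = u mod n"
      by (simp add: mod_eq_dvd_iff mod_eq_0_iff_dvd)
    then show False
      using uv by simp
  qed
  then have "I \<subset> {1..k}"
    using assms(3) by (auto simp: L_type_def)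
  then show ?thesis
    using psubset_card_mono[of "{1..k}" I] by simp
qed

theorem lemma2p7:
  fixes n :: int and k :: nat and l :: "nat \<Rightarrow> int" and u v :: int and I :: "nat set"
  assumes "k \<ge> 2"
    and "\<forall>i\<in>{1..k}. l i > 0"
    and "generic k l"
    and "n = (\<Sum>i\<in>{1..k}. l i)"
    and "oriented_edge n k l (u, v)"
    and "L_type n k l (u, v) I"
  shows "\<exists>Ys ty. homotopic_rel n k l u v [(u, v)] Ys \<and> length Ys = card I
           \<and> (\<forall>j < length Ys. atomic n k l (Ys ! j) (ty j))
           \<and> inj_on ty {..<length Ys} \<and> ty ` {..<length Ys} = I"
proof -
  define t where "t = card I"
  have I: "I \<noteq> {}" "I \<subseteq> {1..k}" "(v - u) mod n = sum l I mod n"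
    using assms(6) by (auto simp: L_type_def)
  have uv: "u \<in> {0..<n}" "v \<in> {0..<n}"
    using assms(5) by (simp_all add: oriented_edge_def)
  have t: "0 < t" "t < k"
    using I card_L_type_less[OF assms(4-6)] finite_subset[OF I(2)] by (auto simp: t_def card_gt_0_iff)
  obtain \<tau> where \<tau>: "\<tau> permutes {1..k}" "\<tau> ` {1..t} = I"
    using obtain_permutes_image_eq[of "{1..k}" "{1..t}" I] I(2) t by (auto simp: t_def)
  have inj: "inj_on \<tau> {1..t}"
    using permutes_inj[OF \<tau>(1)] inj_on_subset by blast
  define w where "w = tonn_vertex n l u \<tau>"
  define ty where "ty = (\<lambda>j. \<tau> (Suc j))"
  have edge: "oriented_edge n k l (w i, w j)" if "i \<le> t" "j \<le> t" "i \<noteq> j" for i j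
    unfolding w_def using that t by (intro oriented_edge_tonn_vertex[OF uv(1) \<tau>(1) assms(2,4)]) auto
  have "homotopic_rel n k l (w 0) (w t) [(w 0, w t)] (vertex_path w t)"
    using edge t
    by (intro homotopic_rel_edge_vertex_path)
       (auto simp: w_def intro!: tonn_simplex_tonn_vertex[OF uv(1) \<tau>(1)])
  moreover have "w 0 = u" "w t = v"
    using tonn_vertex_0[OF uv(1)] tonn_vertex_eq_of_image[OF inj \<tau>(2) uv(2) I(3)] by (simp_all add: w_def)
  moreover have "atomic n k l (vertex_path w t ! j) (ty j)" if "j < t" for j
    using that edge[of j "Suc j"] permutes_in_image[OF \<tau>(1), of "Suc j"] t
    by (simp add: atomic_def vertex_path_def ty_def w_def tonn_vertex_Suc)
  moreover have "bij_betw ty {..<t} I"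
    using bij_betw_Suc_shift[OF inj] \<tau>(2) by (simp add: ty_def)
  ultimately show ?thesis
    by (intro exI[of _ "vertex_path w t"] exI[of _ ty]) (simp add: t_def bij_betw_def)
qed

end
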